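(* Assume (C), $c>a$ and $d<b$. (a) If $c+d\ge 0$, then the set $\mathcal E=\{(x,y,z)\in S^2:\ z\ge \frac{a+dx}{c}\}$ is invariant under $V$, i.e. $V(\mathcal E)\subseteq \mathcal E$. (b) If $c+d<0$, then the set $F=\{(x,y,z)\in S^2:\ z< \frac{a+dx}{c}\}$ is invariant under $V$, i.e. $V(F)\subseteq F$.
   Context: Let $S^2=\{(x,y,z)\in\mathbb{R}^3:\ x,y,z\ge 0,\ x+y+z=1\}$. Fix real parameters $a,b,c,d$ satisfying condition (C): $0\le a\le 1$, $0\le b\le 1$, $-(1-a)\le c\le 1+a$, $-(1-b)\le d\le 1-a$. Let $V(x,y,z)=\big(x(1-b+dy),\ y(1-a-dx+cz),\ z(1-cy)+ay+bx\big)$; under (C) it maps $S^2$ into itself. *)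

theory Defs
  imports Complex_Main
begin

definition simplex2 :: "(real \<times> real \<times> real) set" where
  "simplex2 = {(x,y,z). x \<ge> 0 \<and> y \<ge> 0 \<and> z \<ge> 0 \<and> x + y + z = 1}"

definition condC :: "real \<Rightarrow> real \<Rightarrow> real \<Rightarrow> real \<Rightarrow> bool" where
  "condC a b c d \<longleftrightarrow> 0 \<le> a \<and> a \<le> 1 \<and> 0 \<le> b \<and> b \<le> 1 \<and>
     -(1 - a) \<le> c \<and> c \<le> 1 + a \<and> -(1 - b) \<le> d \<and> d \<le> 1 - a"

definition Vop :: "real \<Rightarrow> real \<Rightarrow> real \<Rightarrow> real \<Rightarrow> real \<times> real \<times> real \<Rightarrow> real \<times> real \<times> real" where
  "Vop a b c d p = (case p of (x,y,z) \<Rightarrow>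
     (x * (1 - b + d * y), y * (1 - a - d * x + c * z), z * (1 - c * y) + a * y + b * x))"

definition setE :: "real \<Rightarrow> real \<Rightarrow> real \<Rightarrow> real \<Rightarrow> (real \<times> real \<times> real) set" where
  "setE a b c d = {(x,y,z) \<in> simplex2. z \<ge> (a + d * x) / c}"

definition setF :: "real \<Rightarrow> real \<Rightarrow> real \<Rightarrow> real \<Rightarrow> (real \<times> real \<times> real) set" where
  "setF a b c d = {(x,y,z) \<in> simplex2. z < (a + d * x) / c}"

end

theory Submission
  imports Defs
begin

text \<open>With \<open>g(x,y,z) = c z - a - d x\<close>, both sets are sign conditions on \<open>g\<close> (as \<open>c > a \<ge> 0\<close>),
  and on the simplex \<open>g \<circ> V = g \<cdot> (1 - c y) + x (c + d) (b - d y)\<close>. The factor \<open>b - d y\<close> is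
  nonnegative and \<open>1 - c y\<close> is nonnegative on \<open>\<E>\<close>, resp. positive when \<open>c + d < 0\<close>, so the
  sign of \<open>g\<close> is preserved.\<close>

definition barrier :: "real \<Rightarrow> real \<Rightarrow> real \<Rightarrow> real \<times> real \<times> real \<Rightarrow> real" where
  "barrier a c d p = (case p of (x, y, z) \<Rightarrow> c * z - a - d * x)"

lemma diff_mult_nonneg_unit_interval:
  fixes b d y :: real
  assumes "d \<le> b" "0 \<le> b" "0 \<le> y" "y \<le> 1"
  shows "b - d * y \<ge> 0"
proof (cases "d \<ge> 0")
  case True
  then have "d * y \<le> d" using assms by (simp add: mult_left_le)
  then show ?thesis using assms by simp
next
  case False
  then show ?thesis using assms mult_nonpos_nonneg[of d y] by linarith
qed

lemma Vop_simplex2: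
  assumes C: "condC a b c d" and p: "p \<in> simplex2"
  shows "Vop a b c d p \<in> simplex2"
proof -
  obtain x y z where p_eq: "p = (x, y, z)" by (cases p)
  with p have s: "x \<ge> 0" "y \<ge> 0" "z \<ge> 0" "x + y + z = 1" by (auto simp: simplex2_def)
  from C have h: "0 \<le> a" "a \<le> 1" "0 \<le> b" "b \<le> 1" "-(1 - a) \<le> c" "c \<le> 1 + a"
    "-(1 - b) \<le> d" "d \<le> 1 - a" by (auto simp: condC_def)
  have "(1 - b) - (- d) * y \<ge> 0" using h s by (intro diff_mult_nonneg_unit_interval) auto
  then have x': "x * (1 - b + d * y) \<ge> 0" using s by simp
  have "d * x \<le> (1 - a) * x" "-(1 - a) * z \<le> c * z" using h s by (simp_all add: mult_right_mono)
  moreover have "(1 - a) * x + (1 - a) * y + (1 - a) * z = 1 - a"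
    by (metis s(4) distrib_left mult.right_neutral)
  ultimately have "1 - a - d * x + c * z \<ge> (1 - a) * y" by linarith
  moreover have "(1 - a) * y \<ge> 0" using h s by simp
  ultimately have y': "y * (1 - a - d * x + c * z) \<ge> 0" using s by simp
  have "z * (c * y) \<le> z * ((1 + a) * y)" using h s by (intro mult_left_mono mult_right_mono) auto
  then have "z * (1 - c * y) + a * y \<ge> z * (1 - y) + a * y * (1 - z)" by (simp add: algebra_simps)
  moreover have "z * (1 - y) \<ge> 0" "a * y * (1 - z) \<ge> 0" "b * x \<ge> 0" using s h by auto
  ultimately have z': "z * (1 - c * y) + a * y + b * x \<ge> 0" by linarith
  have "x * (1 - b + d * y) + y * (1 - a - d * x + c * z) + (z * (1 - c * y) + a * y + b * x)
      = x + y + z"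
    by (simp add: algebra_simps)
  with s(4) have "x * (1 - b + d * y) + y * (1 - a - d * x + c * z) + (z * (1 - c * y) + a * y + b * x) = 1"
    by simp
  with x' y' z' show ?thesis by (simp add: p_eq Vop_def simplex2_def)
qed

lemma barrier_Vop:
  assumes "x + y + z = 1"
  shows "barrier a c d (Vop a b c d (x, y, z))
       = barrier a c d (x, y, z) * (1 - c * y) + x * (c + d) * (b - d * y)"
proof -
  have "z = 1 - x - y" using assms by simp
  then show ?thesis by (simp add: barrier_def Vop_def algebra_simps)
qed

lemma setE_eq_barrier_nonneg:
  assumes "c > 0"
  shows "setE a b c d = {p \<in> simplex2. barrier a c d p \<ge> 0}"
  using assms by (auto simp: setE_def barrier_def pos_divide_le_eq algebra_simps)

lemma setF_eq_barrier_neg: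
  assumes "c > 0"
  shows "setF a b c d = {p \<in> simplex2. barrier a c d p < 0}"
  using assms by (auto simp: setF_def barrier_def pos_less_divide_eq algebra_simps)

lemma Vop_setE_subset:
  assumes C: "condC a b c d" and "c > 0" "d \<le> b" "c + d \<ge> 0"
  shows "Vop a b c d ` setE a b c d \<subseteq> setE a b c d"
proof (rule image_subsetI)
  fix p
  assume "p \<in> setE a b c d"
  moreover obtain x y z where p: "p = (x, y, z)" by (cases p)
  ultimately have S: "(x, y, z) \<in> simplex2" and g: "barrier a c d (x, y, z) \<ge> 0"
    using \<open>c > 0\<close> by (auto simp: p setE_eq_barrier_nonneg)
  from S have s: "x \<ge> 0" "y \<ge> 0" "z \<ge> 0" "x + y + z = 1" by (auto simp: simplex2_def)
  from C have "0 \<le> b" "c \<le> 1 + a" by (auto simp: condC_def)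
  have "c * y = c * (x + y + z) - c * z - c * x" by (simp add: algebra_simps)
  also have "\<dots> = c - c * z - c * x" using s by simp
  also have "\<dots> \<le> c - a - x * (c + d)" using g by (simp add: barrier_def algebra_simps)
  also have "\<dots> \<le> 1" using \<open>c \<le> 1 + a\<close> \<open>c + d \<ge> 0\<close> \<open>x \<ge> 0\<close> mult_nonneg_nonneg[of x "c + d"]
    by linarith
  finally have "1 - c * y \<ge> 0" by simp
  moreover have "b - d * y \<ge> 0" using s \<open>d \<le> b\<close> \<open>0 \<le> b\<close> by (intro diff_mult_nonneg_unit_interval) auto
  ultimately have "barrier a c d (Vop a b c d (x, y, z)) \<ge> 0"
    using g s \<open>c + d \<ge> 0\<close> by (simp add: barrier_Vop)
  with Vop_simplex2[OF C S] \<open>c > 0\<close> show "Vop a b c d p \<in> setE a b c d"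
    by (simp add: p setE_eq_barrier_nonneg)
qed

lemma Vop_setF_subset:
  assumes C: "condC a b c d" and "c > 0" "d \<le> b" "c + d < 0"
  shows "Vop a b c d ` setF a b c d \<subseteq> setF a b c d"
proof (rule image_subsetI)
  fix p
  assume "p \<in> setF a b c d"
  moreover obtain x y z where p: "p = (x, y, z)" by (cases p)
  ultimately have S: "(x, y, z) \<in> simplex2" and g: "barrier a c d (x, y, z) < 0"
    using \<open>c > 0\<close> by (auto simp: p setF_eq_barrier_neg)
  from S have s: "x \<ge> 0" "y \<ge> 0" "z \<ge> 0" "x + y + z = 1" by (auto simp: simplex2_def)
  from C have "0 \<le> b" "-(1 - b) \<le> d" by (auto simp: condC_def)
  have "c * y \<le> c" using s \<open>c > 0\<close> by (simp add: mult_left_le)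
  moreover have "c < 1" using \<open>c + d < 0\<close> \<open>0 \<le> b\<close> \<open>-(1 - b) \<le> d\<close> by linarith
  ultimately have "1 - c * y > 0" by linarith
  with g have "barrier a c d (x, y, z) * (1 - c * y) < 0" by (simp add: mult_neg_pos)
  moreover have "x * (c + d) * (b - d * y) \<le> 0"
  proof (rule mult_nonpos_nonneg)
    show "x * (c + d) \<le> 0" using s \<open>c + d < 0\<close> by (simp add: mult_nonneg_nonpos)
    show "b - d * y \<ge> 0" using s \<open>d \<le> b\<close> \<open>0 \<le> b\<close> by (intro diff_mult_nonneg_unit_interval) auto
  qed
  ultimately have "barrier a c d (Vop a b c d (x, y, z)) < 0" by (simp add: barrier_Vop[OF s(4)])
  with Vop_simplex2[OF C S] \<open>c > 0\<close> show "Vop a b c d p \<in> setF a b c d"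
    by (simp add: p setF_eq_barrier_neg)
qed

theorem lemma4p2:
  fixes a b c d :: real
  assumes "condC a b c d" and "c > a" and "d < b"
  shows "(c + d \<ge> 0 \<longrightarrow> Vop a b c d ` setE a b c d \<subseteq> setE a b c d)
       \<and> (c + d < 0 \<longrightarrow> Vop a b c d ` setF a b c d \<subseteq> setF a b c d)"
proof -
  have "c > 0" using assms by (auto simp: condC_def)
  with assms show ?thesis using Vop_setE_subset Vop_setF_subset by simp
qed

end
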